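(* Assume the monotone likelihood ratio property: for all $\rho,\rho'\in\mathcal{R}$ with $\rho>\rho'$, $\frac{\Pr\{R=\rho\mid Y=1\}}{\Pr\{R=\rho\mid Y=0\}}\ge\frac{\Pr\{R=\rho'\mid Y=1\}}{\Pr\{R=\rho'\mid Y=0\}}$. Then for every $1\le m\le n$, the accuracy $$\theta(\epsilon)=\frac{1}{m}\sum_{i\in\mathcal{N}}\Pr\{J_{i,\epsilon}=1,\ Y_i=1\}$$ of the exponential mechanism $\mathscr{B}_\epsilon$ is increasing in $\epsilon\ge0$.
   Context: There are $n$ individuals indexed by $\mathcal{N}=\{1,\dots,n\}$. Individual $i$ is described by a random tuple $(X_i,A_i,Y_i)$, with features $X_i\in\mathcal{X}$, protected attribute $A_i\in\{0,1\}$ and qualification state $Y_i\in\{0,1\}$; the tuples are i.i.d. with a common distribution $\mathsf{F}$, and $(X,A,Y)$ is a generic tuple with this distribution. A fixed function $r:\mathcal{X}\to\mathcal{R}$ is given, with $\mathcal{R}\subset[0,1]$ finite; $R_i=r(X_i)$, $R=r(X)$. Let $\mathcal{S}$ be the family of all $m$-element subsets of $\mathcal{N}$. For $\epsilon\ge0$, the exponential mechanism $\mathscr{B}_\epsilon$, given realized scores $(r_1,\dots,r_n)$, selects $\mathcal{G}\in\mathcal{S}$ with probability $\exp(\epsilon\sum_{j\in\mathcal{G}}r_j/2)/\sum_{\mathcal{G}'\in\mathcal{S}}\exp(\epsilon\sum_{j\in\mathcal{G}'}r_j/2)$. $J_{i,\epsilon}$ is the indicator that individual $i$ belongs to the set selected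 by $\mathscr{B}_\epsilon$. *)

theory Defs
  imports "HOL-Probability.Probability"
begin

text \<open>Individuals are indexed by N = {1..n}. An individual's tuple (X,A,Y) is an element
of type 'x \<times> bool \<times> bool; the common distribution F is a probability measure on it.\<close>

definition indiv :: "nat \<Rightarrow> nat set" where
  "indiv n = {1..n}"

definition subsets_m :: "nat \<Rightarrow> nat \<Rightarrow> nat set set" where
  "subsets_m n m = {G. G \<subseteq> indiv n \<and> card G = m}"

definition expmech_prob :: "real \<Rightarrow> nat \<Rightarrow> nat \<Rightarrow> (nat \<Rightarrow> real) \<Rightarrow> nat set \<Rightarrow> real" where
  "expmech_prob eps n m rs G =
     exp (eps * (\<Sum>j\<in>G. rs j) / 2) /
     (\<Sum>G'\<in>subsets_m n m. exp (eps * (\<Sum>j\<in>G'. rs j) / 2))"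

definition sel_prob :: "real \<Rightarrow> nat \<Rightarrow> nat \<Rightarrow> (nat \<Rightarrow> real) \<Rightarrow> nat \<Rightarrow> real" where
  "sel_prob eps n m rs i = (\<Sum>G\<in>{G \<in> subsets_m n m. i \<in> G}. expmech_prob eps n m rs G)"

text \<open>Pr{J_{i,eps}=1, Y_i=1} where the tuples are i.i.d. with distribution F
(product measure over N) and the mechanism randomizes given the realized scores.\<close>
definition joint_sel_qual ::
  "('x \<times> bool \<times> bool) measure \<Rightarrow> ('x \<Rightarrow> real) \<Rightarrow> nat \<Rightarrow> nat \<Rightarrow> real \<Rightarrow> nat \<Rightarrow> real" where
  "joint_sel_qual F r n m eps i =
     (\<integral>\<omega>. sel_prob eps n m (\<lambda>j. r (fst (\<omega> j))) i * (if snd (snd (\<omega> i)) then 1 else 0)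
       \<partial>(PiM (indiv n) (\<lambda>_. F)))"

definition accuracy ::
  "('x \<times> bool \<times> bool) measure \<Rightarrow> ('x \<Rightarrow> real) \<Rightarrow> nat \<Rightarrow> nat \<Rightarrow> real \<Rightarrow> real" where
  "accuracy F r n m eps = (1 / real m) * (\<Sum>i\<in>indiv n. joint_sel_qual F r n m eps i)"

definition cond_score_prob ::
  "('x \<times> bool \<times> bool) measure \<Rightarrow> ('x \<Rightarrow> real) \<Rightarrow> real \<Rightarrow> bool \<Rightarrow> real" where
  "cond_score_prob F r rho y =
     measure F {\<omega> \<in> space F. r (fst \<omega>) = rho \<and> snd (snd \<omega>) = y} /
     measure F {\<omega> \<in> space F. snd (snd \<omega>) = y}"

end

theory Submission
  imports Defs
begin

(* Given the realized scores \<rho>, the accuracy is an average over \<rho> of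
   \<Sum>i. Pr{i selected | \<rho>} * Pr{Y = 1 | R = \<rho> i}, and the MLRP makes the posterior
   Pr{Y = 1 | R = c} nondecreasing in c. For fixed \<rho>, \<Sum>i. Pr{i selected} * g i is the mean of
   \<Sum>i\<in>G. g i under the tilted law on m-sets G proportional to exp (\<epsilon> * (\<Sum>i\<in>G. \<rho> i) / 2),
   whose derivative in \<epsilon> is the covariance of \<Sum>i\<in>G. g i and \<Sum>i\<in>G. \<rho> i.
   This covariance is nonnegative when g and \<rho> are similarly ordered: product-weighted m-sets
   are negatively correlated, Pr{i, j \<in> G} \<le> Pr{i \<in> G} * Pr{j \<in> G}, by the log-concavity
   e(k-1) * e(k+1) \<le> e(k)^2 of elementary symmetric sums with nonnegative weights. Hence the
   covariance is \<Sum>i j. D i j * g i * \<rho> j for a symmetric D with zero row sums and nonpositive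
   off-diagonal entries, which equals -1/2 * \<Sum>i j. D i j * (g i - g j) * (\<rho> i - \<rho> j) \<ge> 0. *)

section \<open>Elementary symmetric sums\<close>

text \<open>The degree is an integer so that the sum of degree -1 is 0 and elem_sym_remove holds for degree 0.\<close>

definition elem_sym :: "(nat \<Rightarrow> real) \<Rightarrow> nat set \<Rightarrow> int \<Rightarrow> real" where
  "elem_sym w K k = (\<Sum>H | H \<subseteq> K \<and> int (card H) = k. prod w H)"

lemma elem_sym_empty: "elem_sym w {} k = (if k = 0 then 1 else 0)"
proof -
  have subsets: "{H. H \<subseteq> {} \<and> int (card H) = k} = (if k = 0 then {{}} else {})" by auto
  show ?thesis unfolding elem_sym_def subsets by simp
qed

lemma sum_prod_subsets_superset:
  fixes w :: "nat \<Rightarrow> real"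
  assumes L: "finite L" and A: "A \<subseteq> L"
  shows "(\<Sum>G | G \<subseteq> L \<and> int (card G) = k \<and> A \<subseteq> G. prod w G)
       = prod w A * elem_sym w (L - A) (k - int (card A))"
proof -
  have finA: "finite A" using L A finite_subset by blast
  have "(\<Sum>G | G \<subseteq> L \<and> int (card G) = k \<and> A \<subseteq> G. prod w G)
      = (\<Sum>H | H \<subseteq> L - A \<and> int (card H) = k - int (card A). prod w (A \<union> H))"
  proof (rule sum.reindex_bij_witness[of _ "\<lambda>H. A \<union> H" "\<lambda>G. G - A"])
    fix G assume "G \<in> {G. G \<subseteq> L \<and> int (card G) = k \<and> A \<subseteq> G}"
    moreover from this have "card A \<le> card G" using L by (auto intro: card_mono finite_subset)
    ultimately show "A \<union> (G - A) = G" "G - A \<in> {H. H \<subseteq> L - A \<and> int (card H) = k - int (card A)}"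
      using finA by (auto simp: card_Diff_subset of_nat_diff)
  next
    fix H assume H: "H \<in> {H. H \<subseteq> L - A \<and> int (card H) = k - int (card A)}"
    then have "finite H" "A \<inter> H = {}" using L finite_subset by blast+
    with H show "A \<union> H - A = H" "A \<union> H \<in> {G. G \<subseteq> L \<and> int (card G) = k \<and> A \<subseteq> G}"
      using A finA by (auto simp: card_Un_disjoint)
  qed (auto simp: Un_absorb1)
  also have "\<dots> = (\<Sum>H | H \<subseteq> L - A \<and> int (card H) = k - int (card A). prod w A * prod w H)"
    using L finA by (intro sum.cong refl prod.union_disjoint) (auto intro: finite_subset)
  finally show ?thesis by (simp add: elem_sym_def sum_distrib_left)
qed

lemma elem_sym_remove:
  assumes "finite L" "x \<in> L"
  shows "elem_sym w L k = elem_sym w (L - {x}) k + w x * elem_sym w (L - {x}) (k - 1)"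
proof -
  have "{G. G \<subseteq> L \<and> int (card G) = k}
      = {G. G \<subseteq> L - {x} \<and> int (card G) = k} \<union> {G. G \<subseteq> L \<and> int (card G) = k \<and> {x} \<subseteq> G}"
    by auto
  then have "elem_sym w L k = elem_sym w (L - {x}) k + (\<Sum>G | G \<subseteq> L \<and> int (card G) = k \<and> {x} \<subseteq> G. prod w G)"
    unfolding elem_sym_def using assms(1) by (subst sum.union_disjoint[symmetric]) auto
  then show ?thesis using sum_prod_subsets_superset[of L "{x}" w k] assms by simp
qed

lemma elem_sym_log_concave:
  assumes "finite K" "\<forall>i. w i \<ge> 0" "j \<le> k + 1"
  shows "elem_sym w K (j - 1) * elem_sym w K (k + 1) \<le> elem_sym w K j * elem_sym w K k"
  using assms(1,3)
proof (induction K arbitrary: j k rule: finite_induct)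
  case empty
  then show ?case by (simp add: elem_sym_empty)
next
  case (insert x K)
  define e where "e = elem_sym w K"
  define c where "c = w x"
  have rec: "elem_sym w (insert x K) t = e t + c * e (t - 1)" for t
    using elem_sym_remove[of "insert x K" x w t] insert.hyps by (simp add: e_def c_def)
  have c: "c \<ge> 0" using assms(2) by (simp add: c_def)
  have IH: "a \<le> b + 1 \<Longrightarrow> e (a - 1) * e (b + 1) \<le> e a * e b" for a b
    using insert.IH unfolding e_def by blast
  have T1: "e (j - 1) * e (k + 1) \<le> e j * e k" using IH insert.prems by blast
  have T2: "e (j - 2) * e (k + 1) \<le> e (j - 1) * e k" using IH[of "j - 1" k] insert.prems by simp
  have T3: "e (j - 2) * e k \<le> e (j - 1) * e (k - 1)" using IH[of "j - 1" "k - 1"] insert.prems by simp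
  have T4: "e (j - 2) * e (k + 1) \<le> e j * e (k - 1)"
  proof (cases "j = k + 1")
    case True
    then show ?thesis by (simp add: mult.commute)
  next
    case False
    then have "e (j - 1) * e k \<le> e j * e (k - 1)" using IH[of j "k - 1"] insert.prems by simp
    with T2 show ?thesis by linarith
  qed
  have "elem_sym w (insert x K) (j - 1) * elem_sym w (insert x K) (k + 1)
      = e (j - 1) * e (k + 1) + c * (e (j - 1) * e k + e (j - 2) * e (k + 1)) + c * c * (e (j - 2) * e k)"
    unfolding rec by (simp add: algebra_simps)
  also have "\<dots> \<le> e j * e k + c * (e (j - 1) * e k + e j * e (k - 1)) + c * c * (e (j - 1) * e (k - 1))"
    using T1 mult_left_mono[OF T4 c] mult_left_mono[OF T3 mult_nonneg_nonneg[OF c c]]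
    by (simp add: distrib_left)
  also have "\<dots> = elem_sym w (insert x K) j * elem_sym w (insert x K) k"
    unfolding rec by (simp add: algebra_simps)
  finally show ?case .
qed

section \<open>Product-weighted random subsets\<close>

text \<open>Unnormalised probability that the random m-subset of I with Pr{G} proportional to
  prod w G contains A.\<close>

definition incl_weight :: "(nat \<Rightarrow> real) \<Rightarrow> nat set \<Rightarrow> nat \<Rightarrow> nat set \<Rightarrow> real" where
  "incl_weight w I m A = (\<Sum>G | G \<subseteq> I \<and> card G = m. if A \<subseteq> G then prod w G else 0)"

lemma incl_weight_eq_elem_sym:
  assumes "finite I" "A \<subseteq> I"
  shows "incl_weight w I m A = prod w A * elem_sym w (I - A) (int m - int (card A))"
proof -
  have "incl_weight w I m A = (\<Sum>G | G \<subseteq> I \<and> int (card G) = int m \<and> A \<subseteq> G. prod w G)"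
    unfolding incl_weight_def using assms(1) by (simp add: sum.inter_filter[symmetric] conj_assoc)
  then show ?thesis using sum_prod_subsets_superset[OF assms, of w "int m"] by simp
qed

lemma incl_weight_negatively_correlated:
  assumes I: "finite I" and w: "\<forall>i. w i \<ge> 0" and ij: "i \<in> I" "j \<in> I" "i \<noteq> j"
  shows "incl_weight w I m {i, j} * incl_weight w I m {} \<le> incl_weight w I m {i} * incl_weight w I m {j}"
proof -
  define K where "K = I - {i, j}"
  define E where "E t = elem_sym w K (int m - t)" for t
  have I_i: "finite (I - {i})" "j \<in> I - {i}" and I_j: "finite (I - {j})" "i \<in> I - {j}"
    using I ij by auto
  have K: "I - {i} - {j} = K" "I - {j} - {i} = K" unfolding K_def by auto
  have Z: "incl_weight w I m {} = E 0 + w j * E 1 + w i * (E 1 + w j * E 2)"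
    using incl_weight_eq_elem_sym[of I "{}" w m] elem_sym_remove[OF I ij(1), of w "int m"]
      elem_sym_remove[OF I_i, of w "int m"] elem_sym_remove[OF I_i, of w "int m - 1"] I
    unfolding K E_def by (simp add: diff_diff_eq)
  have Wi: "incl_weight w I m {i} = w i * (E 1 + w j * E 2)"
    using incl_weight_eq_elem_sym[of I "{i}" w m] elem_sym_remove[OF I_i, of w "int m - 1"] I ij
    unfolding K E_def by (simp add: diff_diff_eq)
  have Wj: "incl_weight w I m {j} = w j * (E 1 + w i * E 2)"
    using incl_weight_eq_elem_sym[of I "{j}" w m] elem_sym_remove[OF I_j, of w "int m - 1"] I ij
    unfolding K E_def by (simp add: diff_diff_eq)
  have Wij: "incl_weight w I m {i, j} = w i * w j * E 2"
    using incl_weight_eq_elem_sym[of I "{i, j}" w m] I ij unfolding K_def E_def by simp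
  have "E 2 * E 0 \<le> E 1 * E 1"
    using elem_sym_log_concave[of K w "int m - 1" "int m - 1"] I w unfolding K_def E_def
    by (simp add: diff_diff_eq)
  then have "0 \<le> w i * w j * (E 1 * E 1 - E 2 * E 0)"
    using w by simp
  then show ?thesis unfolding Z Wi Wj Wij by (simp add: algebra_simps)
qed

definition comonotone_on :: "'a set \<Rightarrow> ('a \<Rightarrow> real) \<Rightarrow> ('a \<Rightarrow> real) \<Rightarrow> bool" where
  "comonotone_on I a b \<longleftrightarrow> (\<forall>i\<in>I. \<forall>j\<in>I. 0 \<le> (a i - a j) * (b i - b j))"

lemma comonotone_on_mono_on_image:
  assumes "mono_on R f" "\<rho> ` I \<subseteq> R"
  shows "comonotone_on I (\<lambda>i. f (\<rho> i)) \<rho>"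
  unfolding comonotone_on_def
proof (intro ballI)
  fix i j assume "i \<in> I" "j \<in> I"
  with assms have "\<rho> i \<le> \<rho> j \<Longrightarrow> f (\<rho> i) \<le> f (\<rho> j)" "\<rho> j \<le> \<rho> i \<Longrightarrow> f (\<rho> j) \<le> f (\<rho> i)"
    by (auto simp: mono_on_def)
  then show "0 \<le> (f (\<rho> i) - f (\<rho> j)) * (\<rho> i - \<rho> j)"
    by (cases "\<rho> i \<le> \<rho> j") (auto simp: mult_nonpos_nonpos)
qed

lemma sum_subsets_swap:
  fixes W :: "'a set \<Rightarrow> real" and c :: "'a \<Rightarrow> real"
  assumes "finite I" "S \<subseteq> Pow I"
  shows "(\<Sum>G\<in>S. W G * sum c G) = (\<Sum>i\<in>I. c i * (\<Sum>G\<in>S. if i \<in> G then W G else 0))"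
proof -
  have "sum c G = (\<Sum>i\<in>I. if i \<in> G then c i else 0)" if "G \<in> S" for G
    using that assms sum.inter_restrict[of I c G] by (auto simp: Int_absorb1)
  then have "(\<Sum>G\<in>S. W G * sum c G) = (\<Sum>G\<in>S. \<Sum>i\<in>I. c i * (if i \<in> G then W G else 0))"
    by (simp add: sum_distrib_left if_distrib mult.commute cong: if_cong)
  also have "\<dots> = (\<Sum>i\<in>I. c i * (\<Sum>G\<in>S. if i \<in> G then W G else 0))"
    by (subst sum.swap) (simp add: sum_distrib_left)
  finally show ?thesis .
qed

lemma comonotone_quadratic_form_nonneg:
  fixes D :: "'a \<Rightarrow> 'a \<Rightarrow> real"
  assumes I: "finite I"
    and sym: "\<And>i j. D i j = D j i"
    and row: "\<And>i. i \<in> I \<Longrightarrow> (\<Sum>j\<in>I. D i j) = 0"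
    and offdiag: "\<And>i j. i \<in> I \<Longrightarrow> j \<in> I \<Longrightarrow> i \<noteq> j \<Longrightarrow> D i j \<le> 0"
    and ab: "comonotone_on I a b"
  shows "0 \<le> (\<Sum>i\<in>I. \<Sum>j\<in>I. D i j * a i * b j)"
proof -
  define Q where "Q = (\<Sum>i\<in>I. \<Sum>j\<in>I. D i j * a i * b j)"
  have diag: "(\<Sum>i\<in>I. \<Sum>j\<in>I. D i j * f i) = 0" for f
    using row by (simp add: sum_distrib_right[symmetric])
  have "(\<Sum>i\<in>I. \<Sum>j\<in>I. D i j * a j * b j) = (\<Sum>j\<in>I. \<Sum>i\<in>I. D j i * (a j * b j))"
    by (subst sum.swap) (simp add: sym mult.assoc)
  also have "\<dots> = 0" by (rule diag)
  finally have diag': "(\<Sum>i\<in>I. \<Sum>j\<in>I. D i j * a j * b j) = 0" .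
  have transposed: "(\<Sum>i\<in>I. \<Sum>j\<in>I. D i j * a j * b i) = Q"
    unfolding Q_def by (subst sum.swap) (simp add: sym)
  have "(\<Sum>i\<in>I. \<Sum>j\<in>I. D i j * (a i - a j) * (b i - b j))
      = (\<Sum>i\<in>I. \<Sum>j\<in>I. D i j * (a i * b i))
        - Q - (\<Sum>i\<in>I. \<Sum>j\<in>I. D i j * a j * b i) + (\<Sum>i\<in>I. \<Sum>j\<in>I. D i j * a j * b j)"
    unfolding Q_def by (simp add: algebra_simps sum.distrib sum_subtractf)
  also have "\<dots> = - 2 * Q"
    using diag[of "\<lambda>i. a i * b i"] diag' transposed by simp
  finally have "- 2 * Q = (\<Sum>i\<in>I. \<Sum>j\<in>I. D i j * ((a i - a j) * (b i - b j)))"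
    by (simp add: mult.assoc)
  also have "\<dots> \<le> 0"
  proof (intro sum_nonpos)
    fix i j assume "i \<in> I" "j \<in> I"
    with offdiag[of i j] ab show "D i j * ((a i - a j) * (b i - b j)) \<le> 0"
      by (cases "i = j") (auto simp: comonotone_on_def mult_nonpos_nonneg)
  qed
  finally show ?thesis by (simp add: Q_def)
qed

lemma sum_incl_weight_mult_sum:
  assumes "finite I"
  shows "(\<Sum>G | G \<subseteq> I \<and> card G = m. (if A \<subseteq> G then prod w G else 0) * sum c G)
       = (\<Sum>i\<in>I. c i * incl_weight w I m (insert i A))"
proof -
  have "{G. G \<subseteq> I \<and> card G = m} \<subseteq> Pow I" by blast
  from sum_subsets_swap[OF assms this, of "\<lambda>G. if A \<subseteq> G then prod w G else 0" c]
  show ?thesis unfolding incl_weight_def by (simp add: if_if_eq_conj)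
qed

lemma sum_incl_weight_insert:
  assumes "finite I"
  shows "(\<Sum>i\<in>I. incl_weight w I m (insert i A)) = real m * incl_weight w I m A"
proof -
  have "(\<Sum>G | G \<subseteq> I \<and> card G = m. (if A \<subseteq> G then prod w G else 0) * sum (\<lambda>_. 1) G)
      = real m * incl_weight w I m A"
    unfolding incl_weight_def sum_distrib_left by (intro sum.cong) auto
  then show ?thesis using sum_incl_weight_mult_sum[OF assms, where c = "\<lambda>_. 1"] by simp
qed

lemma sum_incl_weight_pairs:
  assumes I: "finite I"
  shows "(\<Sum>G | G \<subseteq> I \<and> card G = m. prod w G * sum a G * sum b G)
       = (\<Sum>i\<in>I. \<Sum>j\<in>I. incl_weight w I m {i, j} * a i * b j)"
proof -
  have inner: "(\<Sum>G | G \<subseteq> I \<and> card G = m. if j \<in> G then prod w G * sum a G else 0)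
      = (\<Sum>i\<in>I. a i * incl_weight w I m {i, j})" for j
  proof -
    have "(\<Sum>G | G \<subseteq> I \<and> card G = m. if j \<in> G then prod w G * sum a G else 0)
        = (\<Sum>G | G \<subseteq> I \<and> card G = m. (if {j} \<subseteq> G then prod w G else 0) * sum a G)"
      by (intro sum.cong) auto
    then show ?thesis
      using sum_incl_weight_mult_sum[OF I, where A = "{j}" and c = a] by simp
  qed
  have "{G. G \<subseteq> I \<and> card G = m} \<subseteq> Pow I" by blast
  from sum_subsets_swap[OF I this, of "\<lambda>G. prod w G * sum a G" b]
  have "(\<Sum>G | G \<subseteq> I \<and> card G = m. prod w G * sum a G * sum b G)
      = (\<Sum>j\<in>I. b j * (\<Sum>i\<in>I. a i * incl_weight w I m {i, j}))"
    by (simp add: inner)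
  also have "\<dots> = (\<Sum>i\<in>I. \<Sum>j\<in>I. incl_weight w I m {i, j} * a i * b j)"
    by (subst sum.swap) (simp add: sum_distrib_left mult_ac)
  finally show ?thesis .
qed

lemma subset_sum_covariance_nonneg:
  fixes w a b :: "nat \<Rightarrow> real" and m :: nat
  assumes I: "finite I" and w: "\<forall>i. w i \<ge> 0" and ab: "comonotone_on I a b"
  defines "S \<equiv> {G. G \<subseteq> I \<and> card G = m}"
  shows "(\<Sum>G\<in>S. prod w G * sum a G) * (\<Sum>G\<in>S. prod w G * sum b G)
       \<le> (\<Sum>G\<in>S. prod w G * sum a G * sum b G) * (\<Sum>G\<in>S. prod w G)"
proof -
  define Z where "Z = incl_weight w I m {}"
  define P where "P i = incl_weight w I m {i}" for i
  define P2 where "P2 i j = incl_weight w I m {i, j}" for i j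
  have total: "(\<Sum>G\<in>S. prod w G) = Z"
    unfolding Z_def incl_weight_def S_def by simp
  have linear: "(\<Sum>G\<in>S. prod w G * sum c G) = (\<Sum>i\<in>I. c i * P i)" for c
    using sum_incl_weight_mult_sum[OF I, where A = "{}"] unfolding P_def S_def by simp
  have quadratic: "(\<Sum>G\<in>S. prod w G * sum a G * sum b G) = (\<Sum>i\<in>I. \<Sum>j\<in>I. P2 i j * a i * b j)"
    using sum_incl_weight_pairs[OF I] unfolding P2_def S_def .
  define D where "D i j = Z * P2 i j - P i * P j" for i j
  have "0 \<le> (\<Sum>i\<in>I. \<Sum>j\<in>I. D i j * a i * b j)"
  proof (rule comonotone_quadratic_form_nonneg[OF I _ _ _ ab])
    show "D i j = D j i" for i j unfolding D_def P2_def by (simp add: insert_commute)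
    show "(\<Sum>j\<in>I. D i j) = 0" for i
      using sum_incl_weight_insert[OF I, where A = "{i}"] sum_incl_weight_insert[OF I, where A = "{}"]
      unfolding D_def P_def P2_def Z_def
      by (simp add: sum_subtractf sum_distrib_left[symmetric] sum_distrib_right[symmetric] insert_commute)
    show "D i j \<le> 0" if "i \<in> I" "j \<in> I" "i \<noteq> j" for i j
      using incl_weight_negatively_correlated[OF I w that, of m] unfolding D_def P_def P2_def Z_def
      by (simp add: mult.commute)
  qed
  also have "(\<Sum>i\<in>I. \<Sum>j\<in>I. D i j * a i * b j)
      = Z * (\<Sum>i\<in>I. \<Sum>j\<in>I. P2 i j * a i * b j) - (\<Sum>i\<in>I. \<Sum>j\<in>I. P i * P j * a i * b j)"
    unfolding D_def left_diff_distrib sum_subtractf by (simp add: sum_distrib_left mult_ac)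
  also have "(\<Sum>i\<in>I. \<Sum>j\<in>I. P i * P j * a i * b j) = (\<Sum>i\<in>I. a i * P i) * (\<Sum>j\<in>I. b j * P j)"
    by (simp add: sum_product mult_ac)
  finally show ?thesis unfolding quadratic linear total by (simp add: mult.commute)
qed

section \<open>The exponential mechanism\<close>

lemma tilted_mean_mono:
  fixes s g :: "'a \<Rightarrow> real"
  assumes S: "finite S" "S \<noteq> {}"
    and cov: "\<And>t. (\<Sum>G\<in>S. exp (t * s G) * g G) * (\<Sum>G\<in>S. exp (t * s G) * s G)
                 \<le> (\<Sum>G\<in>S. exp (t * s G) * g G * s G) * (\<Sum>G\<in>S. exp (t * s G))"
    and "t \<le> t'"
  shows "(\<Sum>G\<in>S. exp (t * s G) * g G) / (\<Sum>G\<in>S. exp (t * s G))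
       \<le> (\<Sum>G\<in>S. exp (t' * s G) * g G) / (\<Sum>G\<in>S. exp (t' * s G))"
proof -
  define N where "N x = (\<Sum>G\<in>S. exp (x * s G) * g G)" for x
  define Z where "Z x = (\<Sum>G\<in>S. exp (x * s G))" for x
  define N' where "N' x = (\<Sum>G\<in>S. exp (x * s G) * g G * s G)" for x
  define Z' where "Z' x = (\<Sum>G\<in>S. exp (x * s G) * s G)" for x
  have Z_pos: "Z x > 0" for x
    unfolding Z_def using S by (simp add: sum_pos)
  have "(N has_real_derivative N' x) (at x)" for x
    unfolding N_def N'_def by (rule DERIV_sum) (auto intro!: derivative_eq_intros)
  moreover have "(Z has_real_derivative Z' x) (at x)" for x
    unfolding Z_def Z'_def by (rule DERIV_sum) (auto intro!: derivative_eq_intros)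
  ultimately have "((\<lambda>x. N x / Z x) has_real_derivative (N' x * Z x - N x * Z' x) / (Z x * Z x)) (at x)" for x
    using DERIV_divide Z_pos by (metis less_irrefl)
  moreover have "0 \<le> (N' x * Z x - N x * Z' x) / (Z x * Z x)" for x
    using cov[of x] by (simp add: N_def N'_def Z_def Z'_def)
  ultimately have "N t / Z t \<le> N t' / Z t'"
    by (intro DERIV_nonneg_imp_nondecreasing[OF \<open>t \<le> t'\<close>]) blast
  then show ?thesis by (simp add: N_def Z_def)
qed

lemma sum_sel_prob_mult:
  "(\<Sum>i\<in>indiv n. sel_prob eps n m rs i * g i)
   = (\<Sum>G\<in>subsets_m n m. exp (eps * sum rs G / 2) * sum g G) / (\<Sum>G\<in>subsets_m n m. exp (eps * sum rs G / 2))"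
proof -
  have I: "finite (indiv n)" by (simp add: indiv_def)
  have S: "subsets_m n m \<subseteq> Pow (indiv n)" by (auto simp: subsets_m_def)
  then have "finite (subsets_m n m)" using I finite_subset by blast
  then have "sel_prob eps n m rs i = (\<Sum>G\<in>subsets_m n m. if i \<in> G then expmech_prob eps n m rs G else 0)" for i
    unfolding sel_prob_def by (simp add: sum.inter_filter)
  then have "(\<Sum>i\<in>indiv n. sel_prob eps n m rs i * g i) = (\<Sum>G\<in>subsets_m n m. expmech_prob eps n m rs G * sum g G)"
    using sum_subsets_swap[OF I S, of "expmech_prob eps n m rs" g] by (simp add: mult.commute)
  then show ?thesis by (simp add: expmech_prob_def sum_divide_distrib)
qed

lemma sum_sel_prob_mult_mono:
  assumes gr: "comonotone_on (indiv n) g rs" and "m \<le> n" "eps \<le> eps'"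
  shows "(\<Sum>i\<in>indiv n. sel_prob eps n m rs i * g i) \<le> (\<Sum>i\<in>indiv n. sel_prob eps' n m rs i * g i)"
proof -
  let ?S = "subsets_m n m"
  define s where "s G = sum (\<lambda>j. rs j / 2) G" for G
  have I: "finite (indiv n)" by (simp add: indiv_def)
  have S: "?S \<subseteq> Pow (indiv n)" by (auto simp: subsets_m_def)
  then have finite_S: "finite ?S" using I finite_subset by blast
  have "{1..m} \<in> ?S" using \<open>m \<le> n\<close> by (auto simp: subsets_m_def indiv_def)
  then have nonempty_S: "?S \<noteq> {}" by blast
  have cov: "(\<Sum>G\<in>?S. exp (t * s G) * sum g G) * (\<Sum>G\<in>?S. exp (t * s G) * s G)
      \<le> (\<Sum>G\<in>?S. exp (t * s G) * sum g G * s G) * (\<Sum>G\<in>?S. exp (t * s G))" for t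
  proof -
    define w where "w j = exp (t * (rs j / 2))" for j
    have "exp (t * s G) = prod w G" if "G \<in> ?S" for G
    proof -
      have "finite G" using that S I finite_subset by blast
      then show ?thesis by (simp add: s_def w_def exp_sum sum_distrib_left)
    qed
    moreover have "comonotone_on (indiv n) g (\<lambda>j. rs j / 2)"
      using gr unfolding comonotone_on_def by (simp add: diff_divide_distrib[symmetric])
    ultimately show ?thesis
      using subset_sum_covariance_nonneg[OF I, of w g "\<lambda>j. rs j / 2" m] unfolding subsets_m_def[symmetric] w_def
      by (simp add: s_def cong: sum.cong)
  qed
  from tilted_mean_mono[OF finite_S nonempty_S cov \<open>eps \<le> eps'\<close>] show ?thesis
    by (simp add: sum_sel_prob_mult s_def sum_divide_distrib[symmetric])
qed

lemma sel_prob_restrict: "sel_prob eps n m (restrict rs (indiv n)) i = sel_prob eps n m rs i"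
proof -
  have eq: "sum (restrict rs (indiv n)) G = sum rs G" if "G \<in> subsets_m n m" for G
    using that unfolding subsets_m_def by (intro sum.cong) auto
  then have "(\<Sum>G\<in>subsets_m n m. exp (eps * sum (restrict rs (indiv n)) G / 2))
      = (\<Sum>G\<in>subsets_m n m. exp (eps * sum rs G / 2))"
    by (intro sum.cong) (simp_all only:)
  with eq show ?thesis
    unfolding sel_prob_def expmech_prob_def by (intro sum.cong) (simp_all only: mem_Collect_eq)
qed

section \<open>Scores and qualification in the population\<close>

lemma share_mono_of_ratio_mono:
  fixes x y x' y' :: real
  assumes "0 < y" "0 < y'" "0 \<le> x" "0 \<le> x'" "x' / y' \<le> x / y"
  shows "x' / (x' + y') \<le> x / (x + y)"
proof -
  have "x' * y \<le> x * y'" using assms by (simp add: divide_simps)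
  then show ?thesis using assms by (simp add: divide_simps algebra_simps)
qed

locale scored_population = prob_space F
  for F :: "('x \<times> bool \<times> bool) measure" +
  fixes r :: "'x \<Rightarrow> real" and Rset :: "real set"
  assumes score_measurable: "(\<lambda>\<omega>. r (fst \<omega>)) \<in> borel_measurable F"
    and qualified_measurable: "{\<omega> \<in> space F. snd (snd \<omega>)} \<in> sets F"
    and finite_Rset: "finite Rset"
    and score_in_Rset: "\<forall>x. r x \<in> Rset"
begin

definition score_event :: "real \<Rightarrow> ('x \<times> bool \<times> bool) set" where
  "score_event c = {\<omega> \<in> space F. r (fst \<omega>) = c}"

definition qualified_score_event :: "real \<Rightarrow> ('x \<times> bool \<times> bool) set" where
  "qualified_score_event c = {\<omega> \<in> space F. r (fst \<omega>) = c \<and> snd (snd \<omega>)}"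

definition unqualified_score_event :: "real \<Rightarrow> ('x \<times> bool \<times> bool) set" where
  "unqualified_score_event c = {\<omega> \<in> space F. r (fst \<omega>) = c \<and> \<not> snd (snd \<omega>)}"

lemma score_event_sets: "score_event c \<in> sets F"
proof -
  have "score_event c = (\<lambda>\<omega>. r (fst \<omega>)) -` {c} \<inter> space F"
    unfolding score_event_def by auto
  then show ?thesis using measurable_sets[OF score_measurable, of "{c}"] by simp
qed

lemma qualified_score_event_sets: "qualified_score_event c \<in> sets F"
proof -
  have "qualified_score_event c = score_event c \<inter> {\<omega> \<in> space F. snd (snd \<omega>)}"
    unfolding score_event_def qualified_score_event_def by auto
  then show ?thesis using score_event_sets qualified_measurable by auto
qed

lemma measure_score_event_split:
  "measure F (score_event c) = measure F (qualified_score_event c) + measure F (unqualified_score_event c)"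
proof -
  have "unqualified_score_event c = score_event c - qualified_score_event c"
    unfolding score_event_def qualified_score_event_def unqualified_score_event_def by auto
  moreover have "score_event c = qualified_score_event c \<union> (score_event c - qualified_score_event c)"
    unfolding score_event_def qualified_score_event_def by auto
  ultimately show ?thesis
    using finite_measure_Union[of "qualified_score_event c" "score_event c - qualified_score_event c"]
      score_event_sets qualified_score_event_sets by auto
qed

lemma unqualified_score_event_pos:
  assumes "cond_score_prob F r c False > 0"
  shows "measure F (unqualified_score_event c) > 0"
  using assms unfolding cond_score_prob_def unqualified_score_event_def by (simp add: zero_less_divide_iff)

lemma score_event_pos:
  assumes "cond_score_prob F r c False > 0"
  shows "measure F (score_event c) > 0"
  using unqualified_score_event_pos[OF assms] by (simp add: measure_score_event_split add_nonneg_pos)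

definition posterior :: "real \<Rightarrow> real" where
  "posterior c = measure F (qualified_score_event c) / measure F (score_event c)"

lemma posterior_mono_on:
  assumes Y0_pos: "measure F {\<omega> \<in> space F. \<not> snd (snd \<omega>)} > 0"
    and Y1_pos: "measure F {\<omega> \<in> space F. snd (snd \<omega>)} > 0"
    and denom_pos: "\<forall>\<rho>\<in>Rset. cond_score_prob F r \<rho> False > 0"
    and MLRP: "\<forall>\<rho>\<in>Rset. \<forall>\<rho>'\<in>Rset. \<rho> > \<rho>' \<longrightarrow>
                 cond_score_prob F r \<rho> True / cond_score_prob F r \<rho> False
                 \<ge> cond_score_prob F r \<rho>' True / cond_score_prob F r \<rho>' False"
  shows "mono_on Rset posterior"
proof (rule mono_onI)
  define P1 where "P1 = measure F {\<omega> \<in> space F. snd (snd \<omega>)}"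
  define P0 where "P0 = measure F {\<omega> \<in> space F. \<not> snd (snd \<omega>)}"
  define q1 where "q1 c = measure F (qualified_score_event c)" for c
  define q0 where "q0 c = measure F (unqualified_score_event c)" for c
  have ratio: "cond_score_prob F r c True / cond_score_prob F r c False = q1 c / q0 c * (P0 / P1)" for c
    unfolding cond_score_prob_def q1_def q0_def P0_def P1_def qualified_score_event_def unqualified_score_event_def
    by simp
  have q0_pos: "q0 c > 0" if "c \<in> Rset" for c
    using denom_pos that unfolding q0_def by (simp add: unqualified_score_event_pos)
  fix c' c assume c: "c' \<in> Rset" "c \<in> Rset" "c' \<le> c"
  show "posterior c' \<le> posterior c"
  proof (cases "c' = c")
    case False
    then have "q1 c' / q0 c' * (P0 / P1) \<le> q1 c / q0 c * (P0 / P1)"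
      using MLRP c unfolding ratio by auto
    then have "q1 c' / q0 c' \<le> q1 c / q0 c"
      by (rule mult_right_le_imp_le) (use Y0_pos Y1_pos in \<open>simp add: P0_def P1_def\<close>)
    then show ?thesis
      using share_mono_of_ratio_mono[OF q0_pos q0_pos] c
      unfolding posterior_def measure_score_event_split q1_def q0_def by simp
  qed simp
qed

definition score_box :: "nat set \<Rightarrow> nat \<Rightarrow> (nat \<Rightarrow> real) \<Rightarrow> (nat \<Rightarrow> 'x \<times> bool \<times> bool) set" where
  "score_box I i \<rho> = (\<Pi>\<^sub>E j\<in>I. if j = i then qualified_score_event (\<rho> j) else score_event (\<rho> j))"

lemma score_box_sets:
  assumes "finite I"
  shows "score_box I i \<rho> \<in> sets (\<Pi>\<^sub>M j\<in>I. F)"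
  unfolding score_box_def using assms
  by (intro sets_PiM_I_finite) (auto simp: score_event_sets qualified_score_event_sets)

lemma measure_score_box:
  assumes "finite I" "i \<in> I"
  shows "measure (\<Pi>\<^sub>M j\<in>I. F) (score_box I i \<rho>)
       = measure F (qualified_score_event (\<rho> i)) * (\<Prod>j\<in>I - {i}. measure F (score_event (\<rho> j)))"
proof -
  interpret finite_product_prob_space "\<lambda>_. F" I
    using assms(1) by unfold_locales
  show ?thesis
    unfolding score_box_def
    using assms finite_measure_PiM_emb score_event_sets qualified_score_event_sets
    by (simp add: prod.remove)
qed

lemma mem_score_box:
  assumes "i \<in> I" "\<omega> \<in> space (\<Pi>\<^sub>M j\<in>I. F)" "\<rho> \<in> extensional I"
  shows "\<omega> \<in> score_box I i \<rho> \<longleftrightarrow> \<rho> = restrict (\<lambda>j. r (fst (\<omega> j))) I \<and> snd (snd (\<omega> i))"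
proof
  assume box: "\<omega> \<in> score_box I i \<rho>"
  then have "\<rho> j = r (fst (\<omega> j))" if "j \<in> I" for j
    using that unfolding score_box_def score_event_def qualified_score_event_def
    by (cases "j = i") (auto dest!: PiE_mem[where x = j])
  then have "\<rho> = restrict (\<lambda>j. r (fst (\<omega> j))) I"
    using assms(3) by (auto intro: extensionalityI)
  moreover have "snd (snd (\<omega> i))"
    using box assms(1) unfolding score_box_def qualified_score_event_def by (auto dest!: PiE_mem[where x = i])
  ultimately show "\<rho> = restrict (\<lambda>j. r (fst (\<omega> j))) I \<and> snd (snd (\<omega> i))" ..
next
  assume "\<rho> = restrict (\<lambda>j. r (fst (\<omega> j))) I \<and> snd (snd (\<omega> i))"
  then show "\<omega> \<in> score_box I i \<rho>"
    using assms(2) unfolding score_box_def score_event_def qualified_score_event_def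
    by (auto simp: space_PiM)
qed

lemma joint_sel_qual_eq_sum:
  assumes i: "i \<in> indiv n"
  shows "joint_sel_qual F r n m eps i
       = (\<Sum>\<rho>\<in>PiE (indiv n) (\<lambda>_. Rset).
            sel_prob eps n m \<rho> i * measure (\<Pi>\<^sub>M j\<in>indiv n. F) (score_box (indiv n) i \<rho>))"
proof -
  let ?I = "indiv n" and ?P = "PiE (indiv n) (\<lambda>_. Rset)"
  have I: "finite ?I" by (simp add: indiv_def)
  interpret \<mu>: prob_space "\<Pi>\<^sub>M j\<in>indiv n. F"
    by (intro prob_space_PiM) (simp add: prob_space_axioms)
  have integrand: "sel_prob eps n m (\<lambda>j. r (fst (\<omega> j))) i * (if snd (snd (\<omega> i)) then 1 else 0)
      = (\<Sum>\<rho>\<in>?P. sel_prob eps n m \<rho> i * indicator (score_box ?I i \<rho>) \<omega>)"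
    if \<omega>: "\<omega> \<in> space (\<Pi>\<^sub>M j\<in>indiv n. F)" for \<omega>
  proof -
    define \<rho>\<^sub>\<omega> where "\<rho>\<^sub>\<omega> = restrict (\<lambda>j. r (fst (\<omega> j))) ?I"
    have "\<rho>\<^sub>\<omega> \<in> ?P" using score_in_Rset by (simp add: \<rho>\<^sub>\<omega>_def)
    have "(\<Sum>\<rho>\<in>?P. sel_prob eps n m \<rho> i * indicator (score_box ?I i \<rho>) \<omega>)
        = (\<Sum>\<rho>\<in>?P. if \<rho> = \<rho>\<^sub>\<omega> then sel_prob eps n m \<rho>\<^sub>\<omega> i * (if snd (snd (\<omega> i)) then 1 else 0) else 0)"
      using mem_score_box[OF i \<omega>] by (intro sum.cong) (auto simp: \<rho>\<^sub>\<omega>_def PiE_iff indicator_def)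
    also have "\<dots> = sel_prob eps n m (\<lambda>j. r (fst (\<omega> j))) i * (if snd (snd (\<omega> i)) then 1 else 0)"
      using \<open>\<rho>\<^sub>\<omega> \<in> ?P\<close> finite_PiE[OF I finite_Rset] by (simp add: \<rho>\<^sub>\<omega>_def sel_prob_restrict)
    finally show ?thesis ..
  qed
  have "joint_sel_qual F r n m eps i
      = (\<integral>\<omega>. (\<Sum>\<rho>\<in>?P. sel_prob eps n m \<rho> i * indicator (score_box ?I i \<rho>) \<omega>) \<partial>(\<Pi>\<^sub>M j\<in>indiv n. F))"
    unfolding joint_sel_qual_def by (rule Bochner_Integration.integral_cong[OF refl integrand])
  also have "\<dots> = (\<Sum>\<rho>\<in>?P. \<integral>\<omega>. sel_prob eps n m \<rho> i * indicator (score_box ?I i \<rho>) \<omega> \<partial>(\<Pi>\<^sub>M j\<in>indiv n. F))"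
    using score_box_sets[OF I]
    by (intro Bochner_Integration.integral_sum integrable_mult_right integrable_real_indicator)
      (auto simp: \<mu>.emeasure_eq_measure)
  also have "\<dots> = (\<Sum>\<rho>\<in>?P. sel_prob eps n m \<rho> i * measure (\<Pi>\<^sub>M j\<in>indiv n. F) (score_box ?I i \<rho>))"
    using score_box_sets[OF I] by (simp add: \<mu>.emeasure_eq_measure)
  finally show ?thesis .
qed

lemma accuracy_eq_sum:
  assumes score_pos: "\<forall>c\<in>Rset. measure F (score_event c) > 0"
  shows "accuracy F r n m eps = 1 / real m *
    (\<Sum>\<rho>\<in>PiE (indiv n) (\<lambda>_. Rset). (\<Prod>j\<in>indiv n. measure F (score_event (\<rho> j))) *
        (\<Sum>i\<in>indiv n. sel_prob eps n m \<rho> i * posterior (\<rho> i)))"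
proof -
  let ?I = "indiv n" and ?P = "PiE (indiv n) (\<lambda>_. Rset)"
  have I: "finite ?I" by (simp add: indiv_def)
  have "joint_sel_qual F r n m eps i
      = (\<Sum>\<rho>\<in>?P. (\<Prod>j\<in>?I. measure F (score_event (\<rho> j))) * (sel_prob eps n m \<rho> i * posterior (\<rho> i)))"
    if i: "i \<in> ?I" for i
  proof -
    have "measure (\<Pi>\<^sub>M j\<in>indiv n. F) (score_box ?I i \<rho>)
        = (\<Prod>j\<in>?I. measure F (score_event (\<rho> j))) * posterior (\<rho> i)" if "\<rho> \<in> ?P" for \<rho>
    proof -
      have "measure F (score_event (\<rho> i)) > 0" using score_pos that i by auto
      then show ?thesis
        unfolding measure_score_box[OF I i] prod.remove[OF I i] posterior_def by simp
    qed
    then show ?thesis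
      unfolding joint_sel_qual_eq_sum[OF i] by (intro sum.cong) (simp_all add: mult_ac)
  qed
  then show ?thesis
    unfolding accuracy_def by (simp add: sum.swap[of _ ?I] sum_distrib_left cong: sum.cong)
qed

end

theorem mainTheorem8:
  fixes F :: "('x \<times> bool \<times> bool) measure"
    and r :: "'x \<Rightarrow> real"
    and Rset :: "real set"
    and n m :: nat
  assumes F_prob: "prob_space F"
    and R_meas: "(\<lambda>\<omega>. r (fst \<omega>)) \<in> borel_measurable F"
    and Y_meas: "{\<omega> \<in> space F. snd (snd \<omega>)} \<in> sets F"
    and R_fin: "finite Rset"
    and R_unit: "Rset \<subseteq> {0..1}"
    and r_into: "\<forall>x. r x \<in> Rset"
    and Y0_pos: "measure F {\<omega> \<in> space F. \<not> snd (snd \<omega>)} > 0"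
    and Y1_pos: "measure F {\<omega> \<in> space F. snd (snd \<omega>)} > 0"
    and denom_pos: "\<forall>\<rho>\<in>Rset. cond_score_prob F r \<rho> False > 0"
    and MLRP: "\<forall>\<rho>\<in>Rset. \<forall>\<rho>'\<in>Rset. \<rho> > \<rho>' \<longrightarrow>
                 cond_score_prob F r \<rho> True / cond_score_prob F r \<rho> False
                 \<ge> cond_score_prob F r \<rho>' True / cond_score_prob F r \<rho>' False"
    and m_ge: "1 \<le> m" and m_le: "m \<le> n"
  shows "\<forall>\<epsilon> \<epsilon>'. 0 \<le> \<epsilon> \<and> \<epsilon> \<le> \<epsilon>' \<longrightarrow> accuracy F r n m \<epsilon> \<le> accuracy F r n m \<epsilon>'"
proof -
  interpret scored_population F r Rset
    using F_prob R_meas Y_meas R_fin r_into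
    by (simp add: scored_population_def scored_population_axioms_def)
  have score_pos: "\<forall>c\<in>Rset. measure F (score_event c) > 0"
    using denom_pos score_event_pos by blast
  have mono: "mono_on Rset posterior"
    by (rule posterior_mono_on[OF Y0_pos Y1_pos denom_pos MLRP])
  show ?thesis
  proof (intro allI impI)
    fix \<epsilon> \<epsilon>' :: real
    assume "0 \<le> \<epsilon> \<and> \<epsilon> \<le> \<epsilon>'"
    then have mech_mono: "(\<Sum>i\<in>indiv n. sel_prob \<epsilon> n m \<rho> i * posterior (\<rho> i))
        \<le> (\<Sum>i\<in>indiv n. sel_prob \<epsilon>' n m \<rho> i * posterior (\<rho> i))"
      if "\<rho> \<in> PiE (indiv n) (\<lambda>_. Rset)" for \<rho>
      using that by (intro sum_sel_prob_mult_mono comonotone_on_mono_on_image[OF mono] m_le) auto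
    show "accuracy F r n m \<epsilon> \<le> accuracy F r n m \<epsilon>'"
      unfolding accuracy_eq_sum[OF score_pos]
      by (rule mult_left_mono, rule sum_mono, rule mult_left_mono) (auto simp: mech_mono prod_nonneg)
  qed
qed

end
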